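(* Let $\boldsymbol\xi=(\xi_1,\dots,\xi_n)$ be the indicator vector of the output of binary-tree pivotal sampling on a fixed full binary tree $T$ with leaves $[n]$ and leaf probabilities $q_1,\dots,q_n\in[0,1]$ with integer sum. Let $\mathcal S\subseteq[n]$ with $\Pr[\xi_\ell=1\ \forall\ell\in\mathcal S]>0$. Then the conditional distribution of $(\xi_j)_{j\in[n]\setminus\mathcal S}$ given $\{\xi_\ell=1\ \forall\ell\in\mathcal S\}$ is the joint distribution obtained by running binary-tree pivotal sampling independently on finitely many full binary trees whose leaf sets partition $[n]\setminus\mathcal S$, with suitable leaf probabilities.
   Context: Binary-tree pivotal sampling: let $T$ be a full binary tree whose leaves are identified with an index set, and let $q_i\in[0,1]$ be leaf probabilities with integer sum. Each node can store an index together with a current probability; initially each leaf $i$ stores $i$ with probability $q_i$, and the output set $\mathcal S_{\rm out}$ is empty. Repeatedly choose two sibling nodes that both store indices, say $i$ with probability $q_i$ and $j$ with probability $q_j$, with parent $P$, and remove them. If $q_i+q_j\le1$: with probability $q_i/(q_i+q_j)$ store $i$ at $P$ with probability $q_i+q_j$ ($j$ is rejected), otherwise store $j$ at $P$ with probability $q_i+q_j$ ($i$ is rejected). If $q_i+q_j>1$: with probability $(1-q_i)/(2-q_i-q_j)$ put $j$ into $\mathcal S_{\rm out}$ and store $i$ at $P$ with probability $q_i+q_j-1$; otherwise put $i$ into $\mathcal S_{\rm out}$ and store $j$ at $P$ with probability $q_i+q_j-1$. When only the root stores an index, put it into $\mathcal S_{\rm out}$ iff its probability is $1$. *)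

theory Defs
  imports "HOL-Probability.Probability_Mass_Function"
begin

datatype 'a btree = Lf 'a | Nd "'a btree" "'a btree"

fun leaves :: "'a btree \<Rightarrow> 'a list" where
  "leaves (Lf i) = [i]"
| "leaves (Nd l r) = leaves l @ leaves r"

text \<open>A node state: (stored index, its current probability, output produced so far in the subtree).
  One pivotal step merging two sibling states into their parent.\<close>
definition pivot_merge ::
  "('a \<times> real \<times> 'a set) \<Rightarrow> ('a \<times> real \<times> 'a set) \<Rightarrow> ('a \<times> real \<times> 'a set) pmf" where
  "pivot_merge x y = (case x of (i, qi, Si) \<Rightarrow> case y of (j, qj, Sj) \<Rightarrow>
     (if qi + qj \<le> 1 then
        map_pmf (\<lambda>b. if b then (i, qi + qj, Si \<union> Sj) else (j, qi + qj, Si \<union> Sj))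
          (bernoulli_pmf (qi / (qi + qj)))
      else
        map_pmf (\<lambda>b. if b then (i, qi + qj - 1, insert j (Si \<union> Sj))
                           else (j, qi + qj - 1, insert i (Si \<union> Sj)))
          (bernoulli_pmf ((1 - qi) / (2 - qi - qj)))))"

text \<open>Running the procedure on a subtree: distribution of the root state.
  Disjoint subtrees evolve independently, so the order of sibling merges is irrelevant.\<close>
fun pivot_run :: "('a \<Rightarrow> real) \<Rightarrow> 'a btree \<Rightarrow> ('a \<times> real \<times> 'a set) pmf" where
  "pivot_run q (Lf i) = return_pmf (i, q i, {})"
| "pivot_run q (Nd l r) =
     bind_pmf (pivot_run q l) (\<lambda>x. bind_pmf (pivot_run q r) (\<lambda>y. pivot_merge x y))"

definition pivotal_sampling :: "('a \<Rightarrow> real) \<Rightarrow> 'a btree \<Rightarrow> 'a set pmf" where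
  "pivotal_sampling q T =
     map_pmf (\<lambda>(i, p, S). if p = 1 then insert i S else S) (pivot_run q T)"

fun pivotal_forest :: "('a \<Rightarrow> real) \<Rightarrow> 'a btree list \<Rightarrow> 'a set pmf" where
  "pivotal_forest q [] = return_pmf {}"
| "pivotal_forest q (t # ts) =
     bind_pmf (pivotal_sampling q t) (\<lambda>A. bind_pmf (pivotal_forest q ts) (\<lambda>B. return_pmf (A \<union> B)))"

end

theory Submission
  imports Defs
begin

text \<open>
  The run of the procedure on a tree is abstracted into a pivot tree: every internal node
  records whether its merge is light (probabilities summing to at most 1) or heavy, and the
  probability \<open>r\<close> that the index coming from the left survives. Such a tree determines two output
  laws, given that the index surviving at the root is finally rejected or selected, and each is
  built from the children's laws by independent unions and Bernoulli mixtures.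

  Restricting these laws to outputs containing a leaf \<open>l\<close> and removing \<open>l\<close> gives, up to
  constant factors, the two laws of a pivot tree on the remaining leaves, whose weights are updated
  by Bayes' rule; iterating over the leaves of \<open>S\<close> describes the conditional law. Conversely every
  pivot tree, including the degenerate weights 0 and 1 that conditioning produces, is realized by
  pivotal sampling on its shape for suitable leaf probabilities, chosen by induction through the
  root probabilities of the subtrees. The realizing root probability is 0 or 1, which makes the
  leaf sum an integer, so the conditional law is pivotal sampling on a forest of at most one tree.
\<close>

section \<open>Independent unions and Bernoulli mixtures of random sets\<close>

definition union_pmf :: "'a set pmf \<Rightarrow> 'a set pmf \<Rightarrow> 'a set pmf" where
  "union_pmf X Y = bind_pmf X (\<lambda>A. bind_pmf Y (\<lambda>B. return_pmf (A \<union> B)))"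

definition mix_pmf :: "real \<Rightarrow> 'a pmf \<Rightarrow> 'a pmf \<Rightarrow> 'a pmf" where
  "mix_pmf r X Y = bind_pmf (bernoulli_pmf r) (\<lambda>b. if b then X else Y)"

lemma union_pmf_commute: "union_pmf X Y = union_pmf Y X"
  unfolding union_pmf_def by (subst bind_commute_pmf) (simp add: Un_commute)

lemma union_pmf_return_empty [simp]: "union_pmf (return_pmf {}) X = X"
  by (simp add: union_pmf_def bind_return_pmf bind_return_pmf')

lemma union_pmf_return [simp]: "union_pmf (return_pmf A) (return_pmf B) = return_pmf (A \<union> B)"
  by (simp add: union_pmf_def bind_return_pmf)

lemma set_union_pmf: "set_pmf (union_pmf X Y) = {A \<union> B |A B. A \<in> set_pmf X \<and> B \<in> set_pmf Y}"
  unfolding union_pmf_def by auto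

lemma set_union_pmf_subset:
  "set_pmf X \<subseteq> Pow L \<Longrightarrow> set_pmf Y \<subseteq> Pow M \<Longrightarrow> set_pmf (union_pmf X Y) \<subseteq> Pow (L \<union> M)"
  unfolding set_union_pmf by blast

lemma pmf_union_pmf:
  assumes X: "set_pmf X \<subseteq> Pow L" and Y: "set_pmf Y \<subseteq> Pow M" and "L \<inter> M = {}"
  shows "pmf (union_pmf X Y) C =
    (if C \<subseteq> L \<union> M then pmf X (C \<inter> L) * pmf Y (C \<inter> M) else 0)"
proof -
  let ?f = "\<lambda>(A, B). A \<union> B" and ?P = "pair_pmf X Y"
  have union: "union_pmf X Y = map_pmf ?f ?P"
    unfolding union_pmf_def pair_pmf_def by (simp add: map_bind_pmf)
  have split: "?f z = C \<longleftrightarrow> z = (C \<inter> L, C \<inter> M) \<and> C \<subseteq> L \<union> M" if z: "z \<in> set_pmf ?P" for z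
  proof -
    obtain A B where "z = (A, B)" "A \<subseteq> L" "B \<subseteq> M"
      using z X Y by (cases z) auto
    then show ?thesis using \<open>L \<inter> M = {}\<close> by auto
  qed
  have "pmf (union_pmf X Y) C = measure_pmf.prob ?P (?f -` {C} \<inter> set_pmf ?P)"
    unfolding union pmf_map by (simp only: measure_Int_set_pmf)
  also have "?f -` {C} \<inter> set_pmf ?P = (if C \<subseteq> L \<union> M then {(C \<inter> L, C \<inter> M)} else {}) \<inter> set_pmf ?P"
    using split by auto
  finally show ?thesis
    by (simp only: measure_Int_set_pmf) (simp add: measure_pmf_single pmf_pair)
qed

lemma pmf_mix_pmf:
  "0 \<le> r \<Longrightarrow> r \<le> 1 \<Longrightarrow> pmf (mix_pmf r X Y) A = r * pmf X A + (1 - r) * pmf Y A"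
  by (simp add: mix_pmf_def pmf_bind)

lemma mix_pmf_0 [simp]: "mix_pmf 0 X Y = Y" and mix_pmf_1 [simp]: "mix_pmf 1 X Y = X"
  by (simp_all add: pmf_eqI pmf_mix_pmf)

lemma mix_pmf_same [simp]: "mix_pmf r X X = X"
  by (simp add: mix_pmf_def)

lemma mix_pmf_swap: "0 \<le> r \<Longrightarrow> r \<le> 1 \<Longrightarrow> mix_pmf r X Y = mix_pmf (1 - r) Y X"
  by (rule pmf_eqI) (simp add: pmf_mix_pmf)

lemma mix_pmf_return:
  "mix_pmf r (return_pmf x) (return_pmf y) = map_pmf (\<lambda>b. if b then x else y) (bernoulli_pmf r)"
  by (simp add: mix_pmf_def map_pmf_def if_distrib)

lemma set_mix_pmf_subset: "set_pmf X \<subseteq> A \<Longrightarrow> set_pmf Y \<subseteq> A \<Longrightarrow> set_pmf (mix_pmf r X Y) \<subseteq> A"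
  unfolding mix_pmf_def by (auto split: if_splits)

lemma bind_union_pmf:
  "bind_pmf X (\<lambda>x. bind_pmf Y (\<lambda>y. union_pmf (F x) (G y))) =
     union_pmf (bind_pmf X F) (bind_pmf Y G)"
  unfolding union_pmf_def bind_assoc_pmf
  by (subst bind_commute_pmf[of Y]) simp

lemma bind_mix_pmf:
  "bind_pmf X (\<lambda>x. mix_pmf r (F x) (G x)) = mix_pmf r (bind_pmf X F) (bind_pmf X G)"
  unfolding mix_pmf_def bind_assoc_pmf
  by (subst bind_commute_pmf) (intro bind_pmf_cong; simp)

definition posterior :: "real \<Rightarrow> real \<Rightarrow> real \<Rightarrow> real" where
  "posterior r c d = r * c / (r * c + (1 - r) * d)"

lemma posterior_bounds:
  assumes "0 \<le> r" "r \<le> 1" "0 \<le> c" "0 \<le> d"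
  shows "0 \<le> posterior r c d" "posterior r c d \<le> 1"
proof -
  have "0 \<le> r * c" "0 \<le> (1 - r) * d" using assms by simp_all
  then show "0 \<le> posterior r c d" "posterior r c d \<le> 1"
    by (auto simp: posterior_def divide_le_eq_1)
qed

section \<open>Scaled slices\<close>

definition scaled_slice :: "'a set \<Rightarrow> real \<Rightarrow> 'a set pmf \<Rightarrow> 'a set pmf \<Rightarrow> bool" where
  "scaled_slice S c X Y \<longleftrightarrow> (\<forall>B. B \<inter> S = {} \<longrightarrow> pmf X (B \<union> S) = c * pmf Y B)"

lemma scaled_slice_refl: "scaled_slice {} 1 X X"
  by (simp add: scaled_slice_def)

lemma scaled_slice_trans:
  assumes "scaled_slice S c X Y" "scaled_slice S' c' Y Z" "S \<inter> S' = {}"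
  shows "scaled_slice (S \<union> S') (c * c') X Z"
  unfolding scaled_slice_def
proof (intro allI impI)
  fix B assume B: "B \<inter> (S \<union> S') = {}"
  then have "(B \<union> S') \<inter> S = {}" "B \<inter> S' = {}"
    using assms(3) by auto
  then have "pmf X ((B \<union> S') \<union> S) = c * (c' * pmf Z B)"
    using assms(1,2) unfolding scaled_slice_def by simp
  then show "pmf X (B \<union> (S \<union> S')) = c * c' * pmf Z B"
    by (simp add: Un_ac)
qed

lemma scaled_slice_zero_retarget: "scaled_slice S 0 X Y \<Longrightarrow> scaled_slice S 0 X Z"
  by (simp add: scaled_slice_def)

lemma scaled_slice_union:
  assumes X: "set_pmf X \<subseteq> Pow L" and X': "set_pmf X' \<subseteq> Pow (L - S)" and Y: "set_pmf Y \<subseteq> Pow M"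
    and "L \<inter> M = {}" "S \<subseteq> L" and slice: "scaled_slice S c X X'"
  shows "scaled_slice S c (union_pmf X Y) (union_pmf X' Y)"
  unfolding scaled_slice_def
proof (intro allI impI)
  fix B assume B: "B \<inter> S = {}"
  have LM': "(L - S) \<inter> M = {}" using \<open>L \<inter> M = {}\<close> by blast
  have parts: "(B \<union> S) \<inter> L = (B \<inter> (L - S)) \<union> S" "(B \<union> S) \<inter> M = B \<inter> M"
    "B \<union> S \<subseteq> L \<union> M \<longleftrightarrow> B \<subseteq> (L - S) \<union> M" "B \<inter> (L - S) \<inter> S = {}"
    using B \<open>L \<inter> M = {}\<close> \<open>S \<subseteq> L\<close> by auto
  have "pmf X ((B \<inter> (L - S)) \<union> S) = c * pmf X' (B \<inter> (L - S))"
    using slice parts(4) unfolding scaled_slice_def by simp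
  then show "pmf (union_pmf X Y) (B \<union> S) = c * pmf (union_pmf X' Y) B"
    unfolding pmf_union_pmf[OF X Y \<open>L \<inter> M = {}\<close>] pmf_union_pmf[OF X' Y LM'] parts(1-3)
    by simp
qed

lemma scaled_slice_mix:
  assumes "scaled_slice S c X X'" "scaled_slice S d Y Y'" "0 \<le> r" "r \<le> 1" "0 \<le> c" "0 \<le> d"
  shows "scaled_slice S (r * c + (1 - r) * d) (mix_pmf r X Y) (mix_pmf (posterior r c d) X' Y')"
  unfolding scaled_slice_def
proof (intro allI impI)
  fix B assume B: "B \<inter> S = {}"
  let ?e = "r * c + (1 - r) * d" and ?r' = "posterior r c d"
  have weights: "?e * ?r' = r * c" "?e * (1 - ?r') = (1 - r) * d"
  proof -
    have "r * c = 0" if "?e = 0"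
      using that assms(3-6) by (simp add: add_nonneg_eq_0_iff)
    then show "?e * ?r' = r * c"
      by (cases "?e = 0") (simp_all add: posterior_def)
    then show "?e * (1 - ?r') = (1 - r) * d"
      by (simp add: right_diff_distrib)
  qed
  have "pmf (mix_pmf r X Y) (B \<union> S) = r * c * pmf X' B + (1 - r) * d * pmf Y' B"
    using assms(1-4) B by (simp add: pmf_mix_pmf scaled_slice_def)
  also have "\<dots> = (?e * ?r') * pmf X' B + (?e * (1 - ?r')) * pmf Y' B"
    by (simp only: weights)
  also have "\<dots> = ?e * pmf (mix_pmf ?r' X' Y') B"
    using posterior_bounds[OF assms(3-6)] by (simp add: pmf_mix_pmf distrib_left)
  finally show "pmf (mix_pmf r X Y) (B \<union> S) = ?e * pmf (mix_pmf ?r' X' Y') B" .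
qed

lemma map_cond_pmf_scaled_slice:
  assumes L: "finite L" "S \<subseteq> L" and X: "set_pmf X \<subseteq> Pow L" and Y: "set_pmf Y \<subseteq> Pow (L - S)"
    and slice: "scaled_slice S c X Y" and pos: "measure_pmf.prob X {A. S \<subseteq> A} > 0"
  shows "map_pmf (\<lambda>A. A - S) (cond_pmf X {A. S \<subseteq> A}) = Y"
proof -
  let ?E = "{A. S \<subseteq> A}" and ?g = "\<lambda>B. B \<union> S"
  have "measure_pmf.prob X ?E = measure_pmf.prob X (?E \<inter> Pow L)"
    using X by (intro measure_prob_cong_0) (auto simp: pmf_eq_0_set_pmf)
  also have "?E \<inter> Pow L = ?g ` Pow (L - S)"
  proof (intro equalityI subsetI)
    fix A assume "A \<in> ?E \<inter> Pow L"
    then have "A = ?g (A - S)" "A - S \<in> Pow (L - S)" by auto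
    then show "A \<in> ?g ` Pow (L - S)" by (rule image_eqI)
  qed (use L(2) in auto)
  also have "inj_on ?g (Pow (L - S))"
    by (auto simp: inj_on_def)
  then have "measure_pmf.prob X (?g ` Pow (L - S)) = (\<Sum>B\<in>Pow (L - S). pmf X (B \<union> S))"
    using L(1) by (simp add: measure_measure_pmf_finite sum.reindex)
  also have "\<dots> = (\<Sum>B\<in>Pow (L - S). c * pmf Y B)"
    using slice unfolding scaled_slice_def by (intro sum.cong) auto
  also have "\<dots> = c * measure_pmf.prob Y (Pow (L - S))"
    using L(1) by (simp add: sum_distrib_left measure_measure_pmf_finite)
  also have "measure_pmf.prob Y (Pow (L - S)) = 1"
    using Y by (simp add: measure_pmf.prob_eq_1 AE_measure_pmf_iff subset_eq)
  finally have prob: "measure_pmf.prob X ?E = c" by simp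
  have ne: "set_pmf X \<inter> ?E \<noteq> {}"
    using pos by (auto simp: measure_pmf_zero_iff[symmetric])
  show ?thesis
  proof (rule pmf_eqI)
    fix B
    have preimage: "(\<lambda>A. A - S) -` {B} \<inter> ?E = (if B \<inter> S = {} then {B \<union> S} else {})"
      by auto
    have "pmf (map_pmf (\<lambda>A. A - S) (cond_pmf X ?E)) B =
        measure_pmf.prob (cond_pmf X ?E) ((\<lambda>A. A - S) -` {B} \<inter> ?E)"
      unfolding pmf_map by (rule measure_prob_cong_0) (auto simp: pmf_cond[OF ne])
    also have "\<dots> = (if B \<inter> S = {} then pmf X (B \<union> S) / c else 0)"
      unfolding preimage using prob by (simp add: measure_pmf_single pmf_cond[OF ne])
    also have "\<dots> = pmf Y B"
    proof (cases "B \<inter> S = {}")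
      case True
      then show ?thesis using slice pos prob by (simp add: scaled_slice_def)
    next
      case False
      then have "B \<notin> set_pmf Y" using Y by blast
      then show ?thesis using False by (simp add: pmf_eq_0_set_pmf)
    qed
    finally show "pmf (map_pmf (\<lambda>A. A - S) (cond_pmf X ?E)) B = pmf Y B" .
  qed
qed

section \<open>Pivot trees\<close>

text \<open>In \<open>PNode light r a b\<close>, \<open>r\<close> is the probability that the index coming from \<open>a\<close> survives
  at the node; the index coming from \<open>b\<close> is then rejected in a light merge and output in a heavy
  one. \<open>out_rej R\<close> and \<open>out_sel R\<close> are the output laws of \<open>R\<close> given that the index surviving at
  its root is finally rejected, resp. selected (and then output).\<close>

datatype 'a ptree = PLeaf 'a | PNode bool real "'a ptree" "'a ptree"

fun pleaves :: "'a ptree \<Rightarrow> 'a set" where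
  "pleaves (PLeaf i) = {i}"
| "pleaves (PNode light r a b) = pleaves a \<union> pleaves b"

fun wf_ptree :: "'a ptree \<Rightarrow> bool" where
  "wf_ptree (PLeaf i) = True"
| "wf_ptree (PNode light r a b) \<longleftrightarrow>
     0 \<le> r \<and> r \<le> 1 \<and> pleaves a \<inter> pleaves b = {} \<and> wf_ptree a \<and> wf_ptree b"

definition node_rej ::
  "bool \<Rightarrow> real \<Rightarrow> 'a set pmf \<Rightarrow> 'a set pmf \<Rightarrow> 'a set pmf \<Rightarrow> 'a set pmf \<Rightarrow> 'a set pmf" where
  "node_rej light r Ar As Br Bs =
     (if light then union_pmf Ar Br else mix_pmf r (union_pmf Ar Bs) (union_pmf As Br))"

definition node_sel ::
  "bool \<Rightarrow> real \<Rightarrow> 'a set pmf \<Rightarrow> 'a set pmf \<Rightarrow> 'a set pmf \<Rightarrow> 'a set pmf \<Rightarrow> 'a set pmf" where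
  "node_sel light r Ar As Br Bs =
     (if light then mix_pmf r (union_pmf As Br) (union_pmf Ar Bs) else union_pmf As Bs)"

fun out_rej :: "'a ptree \<Rightarrow> 'a set pmf" and out_sel :: "'a ptree \<Rightarrow> 'a set pmf" where
  "out_rej (PLeaf i) = return_pmf {}"
| "out_rej (PNode light r a b) = node_rej light r (out_rej a) (out_sel a) (out_rej b) (out_sel b)"
| "out_sel (PLeaf i) = return_pmf {i}"
| "out_sel (PNode light r a b) = node_sel light r (out_rej a) (out_sel a) (out_rej b) (out_sel b)"

definition ptree_output :: "'a ptree \<Rightarrow> bool \<Rightarrow> 'a set pmf" where
  "ptree_output R sel = (if sel then out_sel R else out_rej R)"

lemma set_node_subset:
  assumes "set_pmf Ar \<subseteq> Pow La" "set_pmf As \<subseteq> Pow La" "set_pmf Br \<subseteq> Pow Lb" "set_pmf Bs \<subseteq> Pow Lb"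
  shows "set_pmf (node_rej light r Ar As Br Bs) \<subseteq> Pow (La \<union> Lb)"
    "set_pmf (node_sel light r Ar As Br Bs) \<subseteq> Pow (La \<union> Lb)"
proof -
  have "set_pmf (union_pmf X Y) \<subseteq> Pow (La \<union> Lb)"
    if "set_pmf X \<subseteq> Pow La" "set_pmf Y \<subseteq> Pow Lb" for X Y
    using that by (rule set_union_pmf_subset)
  then show "set_pmf (node_rej light r Ar As Br Bs) \<subseteq> Pow (La \<union> Lb)"
    "set_pmf (node_sel light r Ar As Br Bs) \<subseteq> Pow (La \<union> Lb)"
    using assms by (simp_all add: node_rej_def node_sel_def set_mix_pmf_subset)
qed

lemma set_out_subset:
  "set_pmf (out_rej R) \<subseteq> Pow (pleaves R) \<and> set_pmf (out_sel R) \<subseteq> Pow (pleaves R)"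
  by (induction R) (simp_all add: set_node_subset)

lemma set_ptree_output: "set_pmf (ptree_output R sel) \<subseteq> Pow (pleaves R)"
  using set_out_subset[of R] by (simp add: ptree_output_def)

lemma out_PNode_swap:
  assumes "0 \<le> r" "r \<le> 1"
  shows "out_rej (PNode light (1 - r) b a) = out_rej (PNode light r a b)"
    "out_sel (PNode light (1 - r) b a) = out_sel (PNode light r a b)"
  using assms by (simp_all add: node_rej_def node_sel_def union_pmf_commute mix_pmf_swap[of r])

lemma bind_node:
  "bind_pmf X (\<lambda>x. bind_pmf Y (\<lambda>y. node_rej light r (F x) (G x) (H y) (K y))) =
     node_rej light r (bind_pmf X F) (bind_pmf X G) (bind_pmf Y H) (bind_pmf Y K)"
  "bind_pmf X (\<lambda>x. bind_pmf Y (\<lambda>y. node_sel light r (F x) (G x) (H y) (K y))) =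
     node_sel light r (bind_pmf X F) (bind_pmf X G) (bind_pmf Y H) (bind_pmf Y K)"
  by (simp_all add: node_rej_def node_sel_def bind_mix_pmf bind_union_pmf)

section \<open>Pivotal sampling as a pivot tree\<close>

definition merge_prob :: "real \<Rightarrow> real \<Rightarrow> real" where
  "merge_prob p p' = (if p + p' \<le> 1 then p + p' else p + p' - 1)"

definition merge_weight :: "real \<Rightarrow> real \<Rightarrow> real" where
  "merge_weight p p' = (if p + p' \<le> 1 then p / (p + p') else (1 - p) / (2 - p - p'))"

fun root_prob :: "('a \<Rightarrow> real) \<Rightarrow> 'a btree \<Rightarrow> real" where
  "root_prob q (Lf i) = q i"
| "root_prob q (Nd a b) = merge_prob (root_prob q a) (root_prob q b)"

fun ptree_of :: "('a \<Rightarrow> real) \<Rightarrow> 'a btree \<Rightarrow> 'a ptree" where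
  "ptree_of q (Lf i) = PLeaf i"
| "ptree_of q (Nd a b) = PNode (root_prob q a + root_prob q b \<le> 1)
     (merge_weight (root_prob q a) (root_prob q b)) (ptree_of q a) (ptree_of q b)"

definition rej_part :: "'a \<times> real \<times> 'a set \<Rightarrow> 'a set" where
  "rej_part x = snd (snd x)"

definition sel_part :: "'a \<times> real \<times> 'a set \<Rightarrow> 'a set" where
  "sel_part x = insert (fst x) (snd (snd x))"

lemma pivot_merge_parts:
  assumes "fst (snd x) = p" "fst (snd y) = p'"
  shows "set_pmf (pivot_merge x y) \<subseteq> {z. fst (snd z) = merge_prob p p'}"
    and "map_pmf rej_part (pivot_merge x y) = node_rej (p + p' \<le> 1) (merge_weight p p')
      (return_pmf (rej_part x)) (return_pmf (sel_part x))
      (return_pmf (rej_part y)) (return_pmf (sel_part y))"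
    and "map_pmf sel_part (pivot_merge x y) = node_sel (p + p' \<le> 1) (merge_weight p p')
      (return_pmf (rej_part x)) (return_pmf (sel_part x))
      (return_pmf (rej_part y)) (return_pmf (sel_part y))"
proof -
  obtain i A j B where x: "x = (i, p, A)" and y: "y = (j, p', B)"
    using assms by (cases x, cases y) auto
  show "set_pmf (pivot_merge x y) \<subseteq> {z. fst (snd z) = merge_prob p p'}"
    by (auto simp: x y pivot_merge_def merge_prob_def)
  show "map_pmf rej_part (pivot_merge x y) = node_rej (p + p' \<le> 1) (merge_weight p p')
      (return_pmf (rej_part x)) (return_pmf (sel_part x))
      (return_pmf (rej_part y)) (return_pmf (sel_part y))"
    "map_pmf sel_part (pivot_merge x y) = node_sel (p + p' \<le> 1) (merge_weight p p')
      (return_pmf (rej_part x)) (return_pmf (sel_part x))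
      (return_pmf (rej_part y)) (return_pmf (sel_part y))"
    by (auto simp: x y pivot_merge_def merge_weight_def node_rej_def node_sel_def rej_part_def
        sel_part_def pmf.map_comp o_def mix_pmf_return map_pmf_eq_return_pmf_iff
        intro!: map_pmf_cong)
qed

lemma root_prob_pivot_run: "x \<in> set_pmf (pivot_run q T) \<Longrightarrow> fst (snd x) = root_prob q T"
proof (induction T arbitrary: x)
  case (Nd a b)
  then show ?case using pivot_merge_parts(1) by fastforce
qed simp

lemma pivot_run_parts:
  "map_pmf rej_part (pivot_run q T) = out_rej (ptree_of q T) \<and>
   map_pmf sel_part (pivot_run q T) = out_sel (ptree_of q T)"
proof (induction T)
  case (Lf i)
  then show ?case by (simp add: rej_part_def sel_part_def)
next
  case (Nd a b)
  let ?p = "root_prob q a" and ?p' = "root_prob q b"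
  let ?light = "?p + ?p' \<le> 1" and ?r = "merge_weight ?p ?p'"
  have merge: "map_pmf rej_part (pivot_merge x y) = node_rej ?light ?r
      (return_pmf (rej_part x)) (return_pmf (sel_part x))
      (return_pmf (rej_part y)) (return_pmf (sel_part y))"
    "map_pmf sel_part (pivot_merge x y) = node_sel ?light ?r
      (return_pmf (rej_part x)) (return_pmf (sel_part x))
      (return_pmf (rej_part y)) (return_pmf (sel_part y))"
    if "x \<in> set_pmf (pivot_run q a)" "y \<in> set_pmf (pivot_run q b)" for x y
    using pivot_merge_parts(2,3)[OF root_prob_pivot_run root_prob_pivot_run] that by blast+
  have "map_pmf rej_part (pivot_run q (Nd a b)) = node_rej ?light ?r
        (map_pmf rej_part (pivot_run q a)) (map_pmf sel_part (pivot_run q a))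
        (map_pmf rej_part (pivot_run q b)) (map_pmf sel_part (pivot_run q b))"
    "map_pmf sel_part (pivot_run q (Nd a b)) = node_sel ?light ?r
        (map_pmf rej_part (pivot_run q a)) (map_pmf sel_part (pivot_run q a))
        (map_pmf rej_part (pivot_run q b)) (map_pmf sel_part (pivot_run q b))"
    by (simp_all add: map_bind_pmf merge cong: bind_pmf_cong) (simp_all add: map_pmf_def bind_node)
  then show ?case using Nd.IH by simp
qed

lemma pivotal_sampling_ptree_of:
  "pivotal_sampling q T = ptree_output (ptree_of q T) (root_prob q T = 1)"
proof -
  have "pivotal_sampling q T =
      map_pmf (if root_prob q T = 1 then sel_part else rej_part) (pivot_run q T)"
    unfolding pivotal_sampling_def
    by (intro map_pmf_cong refl) (auto simp: rej_part_def sel_part_def dest: root_prob_pivot_run)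
  then show ?thesis using pivot_run_parts[of q T] by (simp add: ptree_output_def)
qed

definition valid_probs :: "('a \<Rightarrow> real) \<Rightarrow> 'a btree \<Rightarrow> bool" where
  "valid_probs q T \<longleftrightarrow> (\<forall>i\<in>set (leaves T). 0 \<le> q i \<and> q i \<le> 1)"

lemma merge_weight_bounds:
  assumes "0 \<le> p" "p \<le> 1" "0 \<le> p'" "p' \<le> 1"
  shows "0 \<le> merge_weight p p'" "merge_weight p p' \<le> 1"
  using assms by (auto simp: merge_weight_def divide_le_eq_1)

lemma root_prob_bounds: "valid_probs q T \<Longrightarrow> 0 \<le> root_prob q T \<and> root_prob q T \<le> 1"
  by (induction T) (auto simp: valid_probs_def merge_prob_def)

lemma pleaves_ptree_of [simp]: "pleaves (ptree_of q T) = set (leaves T)"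
  by (induction T) auto

lemma wf_ptree_of: "valid_probs q T \<Longrightarrow> distinct (leaves T) \<Longrightarrow> wf_ptree (ptree_of q T)"
proof (induction T)
  case (Nd a b)
  then have "valid_probs q a" "valid_probs q b" by (auto simp: valid_probs_def)
  then show ?case
    using Nd merge_weight_bounds root_prob_bounds[of q a] root_prob_bounds[of q b] by auto
qed simp

lemma set_pivotal_sampling: "set_pmf (pivotal_sampling q t) \<subseteq> Pow (set (leaves t))"
  using set_ptree_output[of "ptree_of q t"] by (simp add: pivotal_sampling_ptree_of)

lemma pivotal_forest_Cons:
  "pivotal_forest q (t # ts) = union_pmf (pivotal_sampling q t) (pivotal_forest q ts)"
  by (simp add: union_pmf_def)

lemma pivotal_forest_single: "pivotal_forest q [t] = pivotal_sampling q t"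
  by (simp add: bind_return_pmf bind_return_pmf')

lemma set_pivotal_forest: "set_pmf (pivotal_forest q ts) \<subseteq> Pow (\<Union>t\<in>set ts. set (leaves t))"
proof (induction ts)
  case (Cons t ts)
  have "set_pmf (pivotal_forest q (t # ts)) \<subseteq> Pow (set (leaves t) \<union> (\<Union>t\<in>set ts. set (leaves t)))"
    unfolding pivotal_forest_Cons by (rule set_union_pmf_subset[OF set_pivotal_sampling Cons.IH])
  then show ?case by simp
qed simp

lemma sum_minus_root_prob_Ints:
  "distinct (leaves T) \<Longrightarrow> (\<Sum>i\<in>set (leaves T). q i) - root_prob q T \<in> \<int>"
proof (induction T)
  case (Nd a b)
  then have "(\<Sum>i\<in>set (leaves (Nd a b)). q i) - root_prob q (Nd a b) =
      ((\<Sum>i\<in>set (leaves a). q i) - root_prob q a) + ((\<Sum>i\<in>set (leaves b). q i) - root_prob q b) +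
      (if root_prob q a + root_prob q b \<le> 1 then 0 else 1)"
    by (simp add: sum.union_disjoint merge_prob_def)
  then show ?case using Nd by (simp add: Ints_add)
qed simp

section \<open>Conditioning a pivot tree on selected leaves\<close>

text \<open>The second alternative occurs when every output containing \<open>l\<close> arises with \<open>l\<close> as the index
  surviving at the root: then selecting the root index of \<open>R\<close> corresponds to rejecting that of
  the reduced tree.\<close>

definition slice_pair :: "'a \<Rightarrow> 'a set pmf \<Rightarrow> 'a set pmf \<Rightarrow> 'a set pmf \<Rightarrow> 'a set pmf \<Rightarrow> bool" where
  "slice_pair l Xr Xs Yr Ys \<longleftrightarrow> (\<exists>c d. 0 \<le> c \<and> 0 \<le> d \<and> scaled_slice {l} c Xr Yr \<and>
     (scaled_slice {l} d Xs Ys \<or> c = 0 \<and> scaled_slice {l} d Xs Yr))"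

context
  fixes l :: 'a and La Lb :: "'a set" and Ar As Br Bs Ar' :: "'a set pmf"
  assumes supp: "set_pmf Ar \<subseteq> Pow La" "set_pmf As \<subseteq> Pow La" "set_pmf Ar' \<subseteq> Pow (La - {l})"
    "set_pmf Br \<subseteq> Pow Lb" "set_pmf Bs \<subseteq> Pow Lb"
    and disj: "La \<inter> Lb = {}" and l: "l \<in> La"
begin

private lemma slice_union:
  "set_pmf X \<subseteq> Pow La \<Longrightarrow> set_pmf X' \<subseteq> Pow (La - {l}) \<Longrightarrow> set_pmf Y \<subseteq> Pow Lb \<Longrightarrow>
   scaled_slice {l} c X X' \<Longrightarrow> scaled_slice {l} c (union_pmf X Y) (union_pmf X' Y)"
  using disj l by (intro scaled_slice_union) auto

lemma node_slice_regular:
  assumes As': "set_pmf As' \<subseteq> Pow (La - {l})" and r: "0 \<le> r" "r \<le> 1"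
    and slices: "scaled_slice {l} c Ar Ar'" "scaled_slice {l} d As As'" "0 \<le> c" "0 \<le> d"
  shows "\<exists>r'. 0 \<le> r' \<and> r' \<le> 1 \<and> slice_pair l
    (node_rej light r Ar As Br Bs) (node_sel light r Ar As Br Bs)
    (node_rej light r' Ar' As' Br Bs) (node_sel light r' Ar' As' Br Bs)"
proof (cases light)
  case True
  have "scaled_slice {l} c (union_pmf Ar Br) (union_pmf Ar' Br)"
    "scaled_slice {l} (r * d + (1 - r) * c) (mix_pmf r (union_pmf As Br) (union_pmf Ar Bs))
       (mix_pmf (posterior r d c) (union_pmf As' Br) (union_pmf Ar' Bs))"
    using supp As' slices r by (auto intro!: slice_union scaled_slice_mix)
  moreover have "0 \<le> r * d + (1 - r) * c" using r slices by simp
  ultimately show ?thesis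
    using True slices(3) posterior_bounds[OF r slices(4,3)]
    unfolding slice_pair_def node_rej_def node_sel_def
    by (intro exI[of _ "posterior r d c"]) auto
next
  case False
  have "scaled_slice {l} (r * c + (1 - r) * d) (mix_pmf r (union_pmf Ar Bs) (union_pmf As Br))
       (mix_pmf (posterior r c d) (union_pmf Ar' Bs) (union_pmf As' Br))"
    "scaled_slice {l} d (union_pmf As Bs) (union_pmf As' Bs)"
    using supp As' slices r by (auto intro!: slice_union scaled_slice_mix)
  moreover have "0 \<le> r * c + (1 - r) * d" using r slices by simp
  ultimately show ?thesis
    using False slices(4) posterior_bounds[OF r slices(3,4)]
    unfolding slice_pair_def node_rej_def node_sel_def
    by (intro exI[of _ "posterior r c d"]) auto
qed

lemma node_slice_degenerate:
  assumes r: "0 \<le> r" "r \<le> 1"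
    and slices: "scaled_slice {l} 0 Ar Ar'" "scaled_slice {l} d As Ar'" "0 \<le> d"
  shows "slice_pair l (node_rej light r Ar As Br Bs) (node_sel light r Ar As Br Bs)
    (union_pmf Ar' Br) (union_pmf Ar' Bs)"
proof -
  have rej: "scaled_slice {l} 0 (union_pmf Ar Y) (union_pmf Ar' Br)"
    if "set_pmf Y \<subseteq> Pow Lb" for Y
    using slice_union[OF supp(1,3) that slices(1)] by (rule scaled_slice_zero_retarget)
  have sel: "scaled_slice {l} d (union_pmf As Y) (union_pmf Ar' Y)" if "set_pmf Y \<subseteq> Pow Lb" for Y
    using supp that slices by (intro slice_union)
  show ?thesis
  proof (cases light)
    case True
    have "scaled_slice {l} (r * d + (1 - r) * 0) (mix_pmf r (union_pmf As Br) (union_pmf Ar Bs))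
        (union_pmf Ar' Br)"
      using scaled_slice_mix[OF sel[OF supp(4)] rej[OF supp(5)] r slices(3)] by simp
    then show ?thesis
      using True rej[OF supp(4)] r slices unfolding slice_pair_def node_rej_def node_sel_def
      by (intro exI[of _ 0] exI[of _ "r * d"]) auto
  next
    case False
    have "scaled_slice {l} (r * 0 + (1 - r) * d) (mix_pmf r (union_pmf Ar Bs) (union_pmf As Br))
        (union_pmf Ar' Br)"
      using scaled_slice_mix[OF rej[OF supp(5)] sel[OF supp(4)] r _ slices(3)] by simp
    then show ?thesis
      using False sel[OF supp(5)] r slices unfolding slice_pair_def node_rej_def node_sel_def
      by (intro exI[of _ "(1 - r) * d"] exI[of _ d]) auto
  qed
qed

end

definition conditions_to :: "'a \<Rightarrow> 'a ptree \<Rightarrow> 'a ptree \<Rightarrow> bool" where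
  "conditions_to l R R' \<longleftrightarrow> wf_ptree R' \<and> pleaves R' = pleaves R - {l} \<and>
     slice_pair l (out_rej R) (out_sel R) (out_rej R') (out_sel R')"

lemma conditions_to_sibling_of_leaf:
  assumes "wf_ptree (PNode light r (PLeaf l) b)"
  shows "conditions_to l (PNode light r (PLeaf l) b) b"
proof -
  have b: "wf_ptree b" "l \<notin> pleaves b" "0 \<le> r" "r \<le> 1" using assms by auto
  have "scaled_slice {l} 0 (return_pmf {}) (return_pmf {})"
    "scaled_slice {l} 1 (return_pmf {l}) (return_pmf {})"
    by (auto simp: scaled_slice_def indicator_def)
  then have "slice_pair l
      (out_rej (PNode light r (PLeaf l) b)) (out_sel (PNode light r (PLeaf l) b))
      (union_pmf (return_pmf {}) (out_rej b)) (union_pmf (return_pmf {}) (out_sel b))"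
    using set_out_subset[of b] b
    by (simp only: out_rej.simps out_sel.simps,
        intro node_slice_degenerate[where La = "{l}" and Lb = "pleaves b" and d = 1]) auto
  then show ?thesis using b unfolding conditions_to_def by auto
qed

lemma conditions_to_node:
  assumes R: "wf_ptree (PNode light r a b)" and l: "l \<in> pleaves a" and a': "conditions_to l a a'"
  shows "\<exists>R'. conditions_to l (PNode light r a b) R'"
proof -
  have r: "0 \<le> r" "r \<le> 1" and disj: "pleaves a \<inter> pleaves b = {}" and "wf_ptree b" using R by auto
  have "wf_ptree a'" and leaves_a': "pleaves a' = pleaves a - {l}"
    using a' unfolding conditions_to_def by auto
  then have leaves: "pleaves (PNode light' r' a' b) = pleaves (PNode light r a b) - {l}"
    for light' r'
    using l disj by auto
  have wf: "wf_ptree (PNode light' r' a' b)" if "0 \<le> r'" "r' \<le> 1" for light' r'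
    using that \<open>wf_ptree a'\<close> \<open>wf_ptree b\<close> leaves_a' disj by auto
  note supp = set_out_subset[of a, THEN conjunct1] set_out_subset[of a, THEN conjunct2]
    set_out_subset[of a', unfolded leaves_a', THEN conjunct1]
    set_out_subset[of b, THEN conjunct1] set_out_subset[of b, THEN conjunct2]
  obtain c d where cd: "0 \<le> c" "0 \<le> d" "scaled_slice {l} c (out_rej a) (out_rej a')"
    and "scaled_slice {l} d (out_sel a) (out_sel a') \<or>
      c = 0 \<and> scaled_slice {l} d (out_sel a) (out_rej a')"
    using a' unfolding conditions_to_def slice_pair_def by blast
  then consider (regular) "scaled_slice {l} d (out_sel a) (out_sel a')"
    | (degenerate) "c = 0" "scaled_slice {l} d (out_sel a) (out_rej a')" by blast
  then show ?thesis
  proof cases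
    case regular
    have "set_pmf (out_sel a') \<subseteq> Pow (pleaves a - {l})"
      using set_out_subset[of a'] leaves_a' by simp
    from node_slice_regular[OF supp disj l this r cd(3) regular cd(1,2), of light]
    obtain r' where "0 \<le> r'" "r' \<le> 1" "slice_pair l
        (out_rej (PNode light r a b)) (out_sel (PNode light r a b))
        (out_rej (PNode light r' a' b)) (out_sel (PNode light r' a' b))"
      by auto
    then show ?thesis
      using wf leaves unfolding conditions_to_def by (intro exI[of _ "PNode light r' a' b"]) simp
  next
    case degenerate
    have "slice_pair l (out_rej (PNode light r a b)) (out_sel (PNode light r a b))
        (out_rej (PNode True 0 a' b)) (out_sel (PNode True 0 a' b))"
      using node_slice_degenerate[OF supp disj l r cd(3)[unfolded degenerate(1)] degenerate(2)
          cd(2)]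
      by (simp add: node_rej_def node_sel_def)
    then show ?thesis
      using wf[of 0] leaves unfolding conditions_to_def
      by (intro exI[of _ "PNode True 0 a' b"]) simp
  qed
qed

lemma conditions_to_left:
  assumes "wf_ptree (PNode light r a b)" "l \<in> pleaves a"
    and "a \<noteq> PLeaf l \<Longrightarrow> \<exists>a'. conditions_to l a a'"
  shows "\<exists>R'. conditions_to l (PNode light r a b) R'"
proof (cases "a = PLeaf l")
  case True
  then show ?thesis using conditions_to_sibling_of_leaf assms(1) by (intro exI[of _ b]) simp
next
  case False
  then obtain a' where "conditions_to l a a'" using assms(3) by blast
  then show ?thesis using conditions_to_node[OF assms(1,2)] by blast
qed

lemma conditions_to_exists:
  "wf_ptree R \<Longrightarrow> l \<in> pleaves R \<Longrightarrow> R \<noteq> PLeaf l \<Longrightarrow> \<exists>R'. conditions_to l R R'"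
proof (induction R)
  case (PLeaf i)
  then show ?case by simp
next
  case (PNode light r a b)
  show ?case
  proof (cases "l \<in> pleaves a")
    case True
    have "wf_ptree a" using PNode.prems(1) by simp
    then show ?thesis using conditions_to_left[OF PNode.prems(1) True] PNode.IH(1) True by blast
  next
    case False
    then have "l \<in> pleaves b" using PNode.prems(2) by simp
    have r: "0 \<le> r" "r \<le> 1" and "wf_ptree b" and swapped: "wf_ptree (PNode light (1 - r) b a)"
      using PNode.prems(1) by auto
    obtain R' where "conditions_to l (PNode light (1 - r) b a) R'"
      using conditions_to_left[OF swapped \<open>l \<in> pleaves b\<close>] PNode.IH(2)[OF \<open>wf_ptree b\<close>]
        \<open>l \<in> pleaves b\<close>
      by blast
    then have "conditions_to l (PNode light r a b) R'"
      unfolding conditions_to_def out_PNode_swap[OF r] by (auto simp: Un_commute)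
    then show ?thesis by blast
  qed
qed

lemma ptree_output_slice_leaf:
  assumes "wf_ptree R" "l \<in> pleaves R"
  shows "\<exists>c. pleaves R = {l} \<and> scaled_slice {l} c (ptree_output R sel) (return_pmf {}) \<or>
    (\<exists>R' sel'. wf_ptree R' \<and> pleaves R' = pleaves R - {l} \<and>
       scaled_slice {l} c (ptree_output R sel) (ptree_output R' sel'))"
proof (cases "R = PLeaf l")
  case True
  have "scaled_slice {l} (if sel then 1 else 0) (ptree_output R sel) (return_pmf {})"
    using True by (auto simp: scaled_slice_def ptree_output_def indicator_def)
  then show ?thesis using True by auto
next
  case False
  then obtain R' c d where R': "wf_ptree R'" "pleaves R' = pleaves R - {l}"
    and "scaled_slice {l} c (out_rej R) (out_rej R')"
    and "scaled_slice {l} d (out_sel R) (out_sel R') \<or> scaled_slice {l} d (out_sel R) (out_rej R')"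
    using conditions_to_exists[OF assms False] unfolding conditions_to_def slice_pair_def by blast
  then have "\<exists>c sel'. scaled_slice {l} c (ptree_output R sel) (ptree_output R' sel')"
    unfolding ptree_output_def by (metis (full_types))
  then show ?thesis using R' by blast
qed

lemma ptree_output_slice:
  assumes "finite S"
  shows "wf_ptree R \<Longrightarrow> S \<subseteq> pleaves R \<Longrightarrow>
    \<exists>c. pleaves R = S \<and> scaled_slice S c (ptree_output R sel) (return_pmf {}) \<or>
      (\<exists>R' sel'. wf_ptree R' \<and> pleaves R' = pleaves R - S \<and>
         scaled_slice S c (ptree_output R sel) (ptree_output R' sel'))"
  using assms
proof (induction S arbitrary: R sel rule: finite_induct)
  case empty
  then show ?case using scaled_slice_refl by fastforce
next
  case (insert x S)
  then obtain c R' sel' where R': "wf_ptree R'" "pleaves R' = pleaves R - S"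
    and slice: "scaled_slice S c (ptree_output R sel) (ptree_output R' sel')"
    by blast
  have x: "x \<in> pleaves R'" using R'(2) insert.prems(2) insert.hyps(2) by blast
  have split: "S \<union> {x} = insert x S" "S \<inter> {x} = {}" using insert.hyps(2) by auto
  from ptree_output_slice_leaf[OF R'(1) x, of sel'] obtain d where
    "pleaves R' = {x} \<and> scaled_slice {x} d (ptree_output R' sel') (return_pmf {}) \<or>
      (\<exists>R'' sel''. wf_ptree R'' \<and> pleaves R'' = pleaves R' - {x} \<and>
         scaled_slice {x} d (ptree_output R' sel') (ptree_output R'' sel''))"
    by blast
  then consider
      (empty) "pleaves R' = {x}" "scaled_slice {x} d (ptree_output R' sel') (return_pmf {})"
    | (tree) R'' sel'' where "wf_ptree R''" "pleaves R'' = pleaves R' - {x}"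
        "scaled_slice {x} d (ptree_output R' sel') (ptree_output R'' sel'')"
    by blast
  then show ?case
  proof cases
    case empty
    then have "pleaves R = insert x S" using R'(2) insert.prems(2) by auto
    with scaled_slice_trans[OF slice empty(2) split(2)] show ?thesis unfolding split(1) by blast
  next
    case tree
    then have "pleaves R'' = pleaves R - insert x S" using R'(2) by auto
    with tree scaled_slice_trans[OF slice tree(3) split(2)] show ?thesis unfolding split(1) by blast
  qed
qed

section \<open>Realizing pivot trees by pivotal sampling\<close>

definition achieves :: "'a btree \<Rightarrow> real \<Rightarrow> 'a set pmf \<Rightarrow> 'a set pmf \<Rightarrow> bool" where
  "achieves T p Xr Xs \<longleftrightarrow> (\<exists>q. valid_probs q T \<and> root_prob q T = p \<and>
     out_rej (ptree_of q T) = Xr \<and> out_sel (ptree_of q T) = Xs)"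

text \<open>Root probabilities 0 and 1 both mean that the fate of the root index is decided, so a law
  may be sampled from either end: the rejection law of a heavy node, for instance, is realized
  with root probability 1 by a light merge whose probabilities sum to exactly 1.\<close>

definition samples :: "'a btree \<Rightarrow> 'a set pmf \<Rightarrow> bool" where
  "samples T X \<longleftrightarrow> (\<exists>Y. achieves T 0 X Y) \<or> (\<exists>Y. achieves T 1 Y X)"

lemma ptree_of_cong:
  "(\<And>i. i \<in> set (leaves T) \<Longrightarrow> q i = q' i) \<Longrightarrow>
    root_prob q T = root_prob q' T \<and> ptree_of q T = ptree_of q' T"
  by (induction T) auto

lemma achieves_Nd:
  assumes a: "achieves Ta p Ar As" and b: "achieves Tb p' Br Bs"
    and disj: "set (leaves Ta) \<inter> set (leaves Tb) = {}"
    and "merge_prob p p' = t" "(p + p' \<le> 1) = light" "merge_weight p p' = r"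
  shows "achieves (Nd Ta Tb) t (node_rej light r Ar As Br Bs) (node_sel light r Ar As Br Bs)"
proof -
  obtain qa qb where qa: "valid_probs qa Ta" "root_prob qa Ta = p" "out_rej (ptree_of qa Ta) = Ar"
      "out_sel (ptree_of qa Ta) = As"
    and qb: "valid_probs qb Tb" "root_prob qb Tb = p'" "out_rej (ptree_of qb Tb) = Br"
      "out_sel (ptree_of qb Tb) = Bs"
    using a b unfolding achieves_def by blast
  define q where "q i = (if i \<in> set (leaves Ta) then qa i else qb i)" for i
  have "root_prob q Ta = root_prob qa Ta \<and> ptree_of q Ta = ptree_of qa Ta"
    "root_prob q Tb = root_prob qb Tb \<and> ptree_of q Tb = ptree_of qb Tb"
    using disj by (auto simp: q_def intro!: ptree_of_cong)
  moreover have "valid_probs q (Nd Ta Tb)"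
    using qa(1) qb(1) disj by (auto simp: valid_probs_def q_def)
  ultimately show ?thesis
    using qa qb assms(4-6) unfolding achieves_def by (intro exI[of _ q]) simp
qed

lemma achieves_Nd_sampled_left:
  assumes "samples Ta X" "achieves Tb p Br Bs" "0 < p" "p < 1"
    "set (leaves Ta) \<inter> set (leaves Tb) = {}"
  shows "achieves (Nd Ta Tb) p (union_pmf X Br) (union_pmf X Bs)"
  using assms(1) unfolding samples_def
proof (elim disjE exE)
  fix Y assume "achieves Ta 0 X Y"
  from achieves_Nd[OF this assms(2,5) refl refl refl] show ?thesis
    using assms(3,4) by (simp add: merge_prob_def merge_weight_def node_rej_def node_sel_def)
next
  fix Y assume "achieves Ta 1 Y X"
  from achieves_Nd[OF this assms(2,5) refl refl refl] show ?thesis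
    using assms(3,4) by (simp add: merge_prob_def merge_weight_def node_rej_def node_sel_def)
qed

lemma achieves_Nd_sampled_right:
  assumes "achieves Ta p Ar As" "samples Tb Y" "0 < p" "p < 1"
    "set (leaves Ta) \<inter> set (leaves Tb) = {}"
  shows "achieves (Nd Ta Tb) p (union_pmf Ar Y) (union_pmf As Y)"
  using assms(2) unfolding samples_def
proof (elim disjE exE)
  fix X assume "achieves Tb 0 Y X"
  from achieves_Nd[OF assms(1) this assms(5) refl refl refl] show ?thesis
    using assms(3,4) by (simp add: merge_prob_def merge_weight_def node_rej_def node_sel_def)
next
  fix X assume "achieves Tb 1 X Y"
  from achieves_Nd[OF assms(1) this assms(5) refl refl refl] show ?thesis
    using assms(3,4) by (simp add: merge_prob_def merge_weight_def node_rej_def node_sel_def)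
qed

lemma samples_Nd:
  assumes "samples Ta X" "samples Tb Y" "set (leaves Ta) \<inter> set (leaves Tb) = {}"
  shows "samples (Nd Ta Tb) (union_pmf X Y)"
proof -
  note merge = achieves_Nd[OF _ _ assms(3) refl refl refl]
  from assms(1,2)[unfolded samples_def] show ?thesis
  proof (elim disjE exE)
    fix X' Y' assume "achieves Ta 0 X X'" "achieves Tb 0 Y Y'"
    from merge[OF this] show ?thesis by (auto simp: samples_def merge_prob_def node_rej_def)
  next
    fix X' Y' assume "achieves Ta 0 X X'" "achieves Tb 1 Y' Y"
    from merge[OF this] show ?thesis
      by (auto simp: samples_def merge_prob_def merge_weight_def node_sel_def)
  next
    fix X' Y' assume "achieves Ta 1 X' X" "achieves Tb 0 Y Y'"
    from merge[OF this] show ?thesis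
      by (auto simp: samples_def merge_prob_def merge_weight_def node_sel_def)
  next
    fix X' Y' assume "achieves Ta 1 X' X" "achieves Tb 1 Y' Y"
    from merge[OF this] show ?thesis by (auto simp: samples_def merge_prob_def node_sel_def)
  qed
qed

fun skeleton :: "'a ptree \<Rightarrow> 'a btree" where
  "skeleton (PLeaf i) = Lf i"
| "skeleton (PNode light r a b) = Nd (skeleton a) (skeleton b)"

lemma set_leaves_skeleton [simp]: "set (leaves (skeleton R)) = pleaves R"
  by (induction R) auto

lemma distinct_leaves_skeleton: "wf_ptree R \<Longrightarrow> distinct (leaves (skeleton R))"
  by (induction R) auto

definition realizable :: "'a ptree \<Rightarrow> bool" where
  "realizable R \<longleftrightarrow> (\<forall>p. 0 < p \<and> p < 1 \<longrightarrow> achieves (skeleton R) p (out_rej R) (out_sel R)) \<and>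
     samples (skeleton R) (out_rej R) \<and> samples (skeleton R) (out_sel R)"

lemma achieves_Lf: "0 \<le> p \<Longrightarrow> p \<le> 1 \<Longrightarrow> achieves (Lf i) p (return_pmf {}) (return_pmf {i})"
  unfolding achieves_def valid_probs_def by (intro exI[of _ "\<lambda>_. p"]) simp

lemma realizable_PLeaf: "realizable (PLeaf i)"
  unfolding realizable_def samples_def using achieves_Lf[of 0 i] achieves_Lf[of 1 i]
  by (auto intro: achieves_Lf)

context
  fixes r :: real and a b :: "'a ptree"
  assumes r: "0 \<le> r" "r \<le> 1" and disj: "set (leaves (skeleton a)) \<inter> set (leaves (skeleton b)) = {}"
    and a: "realizable a" and b: "realizable b"
begin

private lemma weight_cases:
  obtains "0 < r" "r < 1" | "r = 0" | "r = 1"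
  using r by fastforce

private lemma achieves_a: "0 < p \<Longrightarrow> p < 1 \<Longrightarrow> achieves (skeleton a) p (out_rej a) (out_sel a)"
  and achieves_b: "0 < p \<Longrightarrow> p < 1 \<Longrightarrow> achieves (skeleton b) p (out_rej b) (out_sel b)"
  and samples_a: "samples (skeleton a) (out_rej a)" "samples (skeleton a) (out_sel a)"
  and samples_b: "samples (skeleton b) (out_rej b)" "samples (skeleton b) (out_sel b)"
  using a b unfolding realizable_def by auto

lemma samples_light_sel: "samples (skeleton (PNode True r a b)) (out_sel (PNode True r a b))"
proof (cases rule: weight_cases)
  case 1
  have "achieves (skeleton (PNode True r a b)) 1 (out_rej (PNode True r a b))
      (out_sel (PNode True r a b))"
    using 1 by (simp, intro achieves_Nd[OF achieves_a[of r] achieves_b[of "1 - r"] disj])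
      (simp_all add: merge_prob_def merge_weight_def)
  then show ?thesis unfolding samples_def by blast
next
  case 2
  then show ?thesis using samples_Nd[OF samples_a(1) samples_b(2) disj] by (simp add: node_sel_def)
next
  case 3
  then show ?thesis using samples_Nd[OF samples_a(2) samples_b(1) disj] by (simp add: node_sel_def)
qed

lemma achieves_light:
  assumes p: "0 < p" "p < 1"
  shows "achieves (skeleton (PNode True r a b)) p (out_rej (PNode True r a b))
    (out_sel (PNode True r a b))"
proof (cases rule: weight_cases)
  case 1
  have "0 < p * r" "p * r < 1" "0 < p * (1 - r)" "p * (1 - r) < 1"
    using 1 p mult_left_le[of r p] mult_left_le[of "1 - r" p] by (simp_all, linarith+)
  then show ?thesis
    using p
    by (simp, intro achieves_Nd[OF achieves_a[of "p * r"] achieves_b[of "p * (1 - r)"] disj])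
      (simp_all add: merge_prob_def merge_weight_def algebra_simps)
next
  case 2
  then show ?thesis
    using achieves_Nd_sampled_left[OF samples_a(1) achieves_b[OF p] p disj]
    by (simp add: node_rej_def node_sel_def)
next
  case 3
  then show ?thesis
    using achieves_Nd_sampled_right[OF achieves_a[OF p] samples_b(1) p disj]
    by (simp add: node_rej_def node_sel_def)
qed

lemma realizable_light: "realizable (PNode True r a b)"
  using samples_light_sel achieves_light samples_Nd[OF samples_a(1) samples_b(1) disj]
  unfolding realizable_def by (simp add: node_rej_def)

lemma samples_heavy_rej: "samples (skeleton (PNode False r a b)) (out_rej (PNode False r a b))"
proof (cases rule: weight_cases)
  case 1
  let ?Ar = "out_rej a" and ?As = "out_sel a" and ?Br = "out_rej b" and ?Bs = "out_sel b"
  have "achieves (skeleton (PNode False r a b)) 1 (node_rej True (1 - r) ?Ar ?As ?Br ?Bs)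
      (node_sel True (1 - r) ?Ar ?As ?Br ?Bs)"
    using 1 by (simp, intro achieves_Nd[OF achieves_a[of "1 - r"] achieves_b[of r] disj])
      (simp_all add: merge_prob_def merge_weight_def)
  moreover have "node_sel True (1 - r) ?Ar ?As ?Br ?Bs = out_rej (PNode False r a b)"
    using r by (simp add: node_rej_def node_sel_def mix_pmf_swap[of r])
  ultimately show ?thesis unfolding samples_def by auto
next
  case 2
  then show ?thesis using samples_Nd[OF samples_a(2) samples_b(1) disj] by (simp add: node_rej_def)
next
  case 3
  then show ?thesis using samples_Nd[OF samples_a(1) samples_b(2) disj] by (simp add: node_rej_def)
qed

lemma achieves_heavy:
  assumes p: "0 < p" "p < 1"
  shows "achieves (skeleton (PNode False r a b)) p (out_rej (PNode False r a b))
    (out_sel (PNode False r a b))"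
proof (cases rule: weight_cases)
  case 1
  have "0 < (1 - p) * r" "(1 - p) * r < 1" "0 < (1 - p) * (1 - r)" "(1 - p) * (1 - r) < 1"
    using 1 p mult_left_le[of r "1 - p"] mult_left_le[of "1 - r" "1 - p"] by (simp_all, linarith+)
  \<comment> \<open>the children's probabilities sum to \<open>1 + p\<close>, making the heavy-merge weight \<open>r\<close>\<close>
  moreover have "2 - (1 - (1 - p) * r) - (1 - (1 - p) * (1 - r)) = 1 - p"
    by (simp add: algebra_simps)
  ultimately show ?thesis
    using p by (simp, intro achieves_Nd[OF achieves_a[of "1 - (1 - p) * r"]
        achieves_b[of "1 - (1 - p) * (1 - r)"] disj])
      (simp_all add: merge_prob_def merge_weight_def)
next
  case 2
  then show ?thesis
    using achieves_Nd_sampled_left[OF samples_a(2) achieves_b[OF p] p disj]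
    by (simp add: node_rej_def node_sel_def)
next
  case 3
  then show ?thesis
    using achieves_Nd_sampled_right[OF achieves_a[OF p] samples_b(2) p disj]
    by (simp add: node_rej_def node_sel_def)
qed

lemma realizable_heavy: "realizable (PNode False r a b)"
  using samples_heavy_rej achieves_heavy samples_Nd[OF samples_a(2) samples_b(2) disj]
  unfolding realizable_def by (simp add: node_sel_def)

end

lemma realizable: "wf_ptree R \<Longrightarrow> realizable R"
proof (induction R)
  case (PLeaf i)
  show ?case by (rule realizable_PLeaf)
next
  case (PNode light r a b)
  then show ?case using realizable_light realizable_heavy by (cases light) auto
qed

lemma samples_pivotal_sampling:
  assumes "distinct (leaves T)" "samples T X"
  shows "\<exists>q. valid_probs q T \<and> (\<Sum>i\<in>set (leaves T). q i) \<in> \<int> \<and> pivotal_sampling q T = X"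
proof -
  obtain q where q: "valid_probs q T" "root_prob q T \<in> {0, 1}" "pivotal_sampling q T = X"
    using assms(2) unfolding samples_def achieves_def
    by (auto simp: pivotal_sampling_ptree_of ptree_output_def)
  have "(\<Sum>i\<in>set (leaves T). q i) - root_prob q T + root_prob q T \<in> \<int>"
    using sum_minus_root_prob_Ints[OF assms(1)] q(2) by (intro Ints_add) auto
  then show ?thesis using q by auto
qed

lemma ptree_output_pivotal_sampling:
  assumes "wf_ptree R"
  shows "\<exists>q. valid_probs q (skeleton R) \<and> (\<Sum>i\<in>pleaves R. q i) \<in> \<int> \<and>
    pivotal_sampling q (skeleton R) = ptree_output R sel"
  using samples_pivotal_sampling[OF distinct_leaves_skeleton[OF assms], of "ptree_output R sel"]
    realizable[OF assms] unfolding realizable_def ptree_output_def by (cases sel) auto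

lemma pivotal_sampling_slice_forest:
  assumes "distinct (leaves T)" "valid_probs q T" "finite S" "S \<subseteq> set (leaves T)"
  shows "\<exists>ts q' c.
      (\<forall>t\<in>set ts. distinct (leaves t) \<and> valid_probs q' t \<and> (\<Sum>i\<in>set (leaves t). q' i) \<in> \<int>)
    \<and> (\<forall>k<length ts. \<forall>l<length ts. k \<noteq> l \<longrightarrow> set (leaves (ts ! k)) \<inter> set (leaves (ts ! l)) = {})
    \<and> (\<Union>t\<in>set ts. set (leaves t)) = set (leaves T) - S
    \<and> scaled_slice S c (pivotal_sampling q T) (pivotal_forest q' ts)"
proof -
  obtain c where "set (leaves T) = S \<and> scaled_slice S c (pivotal_sampling q T) (return_pmf {}) \<or>
      (\<exists>R' sel'. wf_ptree R' \<and> pleaves R' = set (leaves T) - S \<and>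
         scaled_slice S c (pivotal_sampling q T) (ptree_output R' sel'))"
    using ptree_output_slice[OF assms(3) wf_ptree_of[OF assms(2,1)], of "root_prob q T = 1"]
      assms(4)
    by (auto simp: pivotal_sampling_ptree_of)
  then consider
      (empty) "set (leaves T) = S" "scaled_slice S c (pivotal_sampling q T) (pivotal_forest q [])"
    | (tree) R' sel' where "wf_ptree R'" "pleaves R' = set (leaves T) - S"
        "scaled_slice S c (pivotal_sampling q T) (ptree_output R' sel')"
    by auto
  then show ?thesis
  proof cases
    case empty
    then show ?thesis by (intro exI[of _ "[]"]) auto
  next
    case tree
    obtain q' where "valid_probs q' (skeleton R')" "(\<Sum>i\<in>pleaves R'. q' i) \<in> \<int>"
      and "pivotal_sampling q' (skeleton R') = ptree_output R' sel'"
      using ptree_output_pivotal_sampling[OF tree(1), of sel'] by blast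
    moreover from this(3) have "pivotal_forest q' [skeleton R'] = ptree_output R' sel'"
      by (simp only: pivotal_forest_single)
    ultimately show ?thesis
      using tree distinct_leaves_skeleton[OF tree(1)]
      by (intro exI[of _ "[skeleton R']"] exI[of _ q']) auto
  qed
qed

theorem theoremE1:
  fixes n :: nat and T :: "nat btree" and q :: "nat \<Rightarrow> real" and S :: "nat set"
  assumes "distinct (leaves T)"
    and "set (leaves T) = {1..n}"
    and "\<forall>i\<in>{1..n}. 0 \<le> q i \<and> q i \<le> 1"
    and "(\<Sum>i\<in>{1..n}. q i) \<in> \<int>"
    and "S \<subseteq> {1..n}"
    and "measure_pmf.prob (pivotal_sampling q T) {A. S \<subseteq> A} > 0"
  shows "\<exists>(ts :: nat btree list) (q' :: nat \<Rightarrow> real).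
           (\<forall>t\<in>set ts. distinct (leaves t)
               \<and> (\<forall>i\<in>set (leaves t). 0 \<le> q' i \<and> q' i \<le> 1)
               \<and> (\<Sum>i\<in>set (leaves t). q' i) \<in> \<int>)
         \<and> (\<forall>k<length ts. \<forall>l<length ts. k \<noteq> l \<longrightarrow>
               set (leaves (ts ! k)) \<inter> set (leaves (ts ! l)) = {})
         \<and> (\<Union>t\<in>set ts. set (leaves t)) = {1..n} - S
         \<and> map_pmf (\<lambda>A. A - S) (cond_pmf (pivotal_sampling q T) {A. S \<subseteq> A})
             = pivotal_forest q' ts"
proof -
  have "valid_probs q T" using assms(2,3) by (simp add: valid_probs_def)
  moreover have "finite S" using assms(5) by (rule finite_subset) simp
  ultimately
  obtain ts q' c where forest:
      "\<forall>t\<in>set ts. distinct (leaves t) \<and> valid_probs q' t \<and> (\<Sum>i\<in>set (leaves t). q' i) \<in> \<int>"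
      "\<forall>k<length ts. \<forall>l<length ts. k \<noteq> l \<longrightarrow> set (leaves (ts ! k)) \<inter> set (leaves (ts ! l)) = {}"
      "(\<Union>t\<in>set ts. set (leaves t)) = {1..n} - S"
    and slice: "scaled_slice S c (pivotal_sampling q T) (pivotal_forest q' ts)"
    using pivotal_sampling_slice_forest[OF assms(1)] assms(2,5) by metis
  have "map_pmf (\<lambda>A. A - S) (cond_pmf (pivotal_sampling q T) {A. S \<subseteq> A}) = pivotal_forest q' ts"
    using set_pivotal_sampling[of q T] set_pivotal_forest[of q' ts] assms(2)
    by (intro map_cond_pmf_scaled_slice[OF _ assms(5) _ _ slice assms(6)]) (simp_all add: forest(3))
  with forest show ?thesis unfolding valid_probs_def by blast
qed

end
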